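(* There exist two languages $L_1,L_2\subseteq\mathbb{N}$ and an enumeration $x_{1:\infty}$ that is, for each $K\in\{L_1,L_2\}$, an enumeration of $K$ with $o(1)$-noise and without omissions, such that for every $\rho>0$ no element-based generator can, with target $K$ an arbitrary member of the collection $\{L_1,L_2\}$, generate from $K$ in the limit on $x_{1:\infty}$ and achieve element-based upper density at least $\rho$ in $K$.
   Context: The universe is $U=\mathbb{N}$ with its natural order; a language is an infinite subset of $U$. For $A,B\subseteq\mathbb{N}$ with $B=\{b_1<b_2<\cdots\}$, $\mu_{\rm up}(A,B)=\limsup_n\frac1n|A\cap\{b_1,\dots,b_n\}|$. An enumeration of $L$ with $o(1)$-noise and without omissions is a sequence of distinct elements in which every element of $L$ appears and $\frac1n|\{t\le n:x_t\notin L\}|\to0$. An element-based generator outputs at step $n$, from $x_1,\dots,x_n$ (and knowledge of the collection, not of $K$), an element $w_n\notin\{x_1,\dots,x_n,w_1,\dots,w_{n-1}\}$; it generates in the limit from $K$ if $w_n\in K$ for all sufficiently large $n$, and achieves element-based upper density $\rho$ if $\mu_{\rm up}(\{w_1,w_2,\dots\},K)\ge\rho$. *)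

theory Defs
  imports "HOL-Analysis.Analysis" "HOL-Library.Infinite_Set"
begin

text \<open>Sequences are 0-indexed: x 0, x 1, ... correspond to x_1, x_2, ... of the paper.\<close>

definition is_language :: "nat set \<Rightarrow> bool" where
  "is_language L \<longleftrightarrow> infinite L"

definition noisy_enumeration :: "(nat \<Rightarrow> nat) \<Rightarrow> nat set \<Rightarrow> bool" where
  "noisy_enumeration x L \<longleftrightarrow>
     inj x \<and> L \<subseteq> range x \<and>
     ((\<lambda>n. real (card {t. t < n \<and> x t \<notin> L}) / real n) \<longlonglongrightarrow> 0)"

text \<open>Upper density mu_up(A,B) = limsup_n |A \<inter> {b_1,...,b_n}| / n, where b_1 < b_2 < ...
  enumerates B in increasing order (enumerate B (i-1) = b_i).\<close>
definition upper_density :: "nat set \<Rightarrow> nat set \<Rightarrow> ereal" where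
  "upper_density A B =
     limsup (\<lambda>n. ereal (real (card (A \<inter> enumerate B ` {..<n})) / real n))"

definition gen_output :: "(nat list \<Rightarrow> nat) \<Rightarrow> (nat \<Rightarrow> nat) \<Rightarrow> nat \<Rightarrow> nat" where
  "gen_output G x n = G (map x [0..<Suc n])"

definition valid_generator :: "(nat list \<Rightarrow> nat) \<Rightarrow> (nat \<Rightarrow> nat) \<Rightarrow> bool" where
  "valid_generator G x \<longleftrightarrow>
     (\<forall>n. gen_output G x n \<notin> x ` {..n} \<and> gen_output G x n \<notin> gen_output G x ` {..<n})"

definition generates_in_limit :: "(nat list \<Rightarrow> nat) \<Rightarrow> (nat \<Rightarrow> nat) \<Rightarrow> nat set \<Rightarrow> bool" where
  "generates_in_limit G x K \<longleftrightarrow> (\<forall>\<^sub>F n in sequentially. gen_output G x n \<in> K)"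

definition achieves_upper_density ::
    "(nat list \<Rightarrow> nat) \<Rightarrow> (nat \<Rightarrow> nat) \<Rightarrow> nat set \<Rightarrow> real \<Rightarrow> bool" where
  "achieves_upper_density G x K \<rho> \<longleftrightarrow> upper_density (range (gen_output G x)) K \<ge> ereal \<rho>"

end

(* Both languages are a residue class mod 3 together with the sparse set
   shared = {3t^2 + 2 : t not a square slot}.  The stream puts every k with k mod 3 \<noteq> 2 at
   position k^2 and lists shared everywhere else, so it enumerates either language and all
   noise sits at the O(sqrt n) square positions.  A generator that succeeds in the limit for
   both languages must eventually output only elements of lang 0 \<inter> lang 1 = shared, which has
   density zero inside lang 0, whose n-th element is at most 3n. *)

theory Submission
  imports Defs "HOL-Real_Asymp.Real_Asymp"
begin

definition zero_density :: "nat set \<Rightarrow> bool" where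
  "zero_density B \<longleftrightarrow> (\<lambda>n. real (card (B \<inter> {..<n})) / real n) \<longlonglongrightarrow> 0"

lemma zero_density_subset:
  assumes "zero_density B" "A \<subseteq> B"
  shows "zero_density A"
  unfolding zero_density_def
proof (rule tendsto_sandwich[of "\<lambda>_. 0" _ _ "\<lambda>n. real (card (B \<inter> {..<n})) / real n"])
  have "card (A \<inter> {..<n}) \<le> card (B \<inter> {..<n})" for n
    using assms(2) by (intro card_mono) auto
  then show "\<forall>\<^sub>F n in sequentially. real (card (A \<inter> {..<n})) / real n
      \<le> real (card (B \<inter> {..<n})) / real n"
    by (intro always_eventually allI divide_right_mono) auto
qed (use assms(1) zero_density_def in auto)

lemma zero_density_finite:
  assumes "finite A"
  shows "zero_density A"
  unfolding zero_density_def
proof (rule tendsto_sandwich[of "\<lambda>_. 0" _ _ "\<lambda>n. real (card A) / real n"])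
  have "card (A \<inter> {..<n}) \<le> card A" for n
    using assms by (intro card_mono) auto
  then show "\<forall>\<^sub>F n in sequentially. real (card (A \<inter> {..<n})) / real n \<le> real (card A) / real n"
    by (intro always_eventually allI divide_right_mono) auto
  show "(\<lambda>n. real (card A) / real n) \<longlonglongrightarrow> 0"
    by real_asymp
qed auto

lemma zero_density_Un:
  assumes "zero_density A" "zero_density B"
  shows "zero_density (A \<union> B)"
  unfolding zero_density_def
proof (rule tendsto_sandwich[of "\<lambda>_. 0" _ _
    "\<lambda>n. real (card (A \<inter> {..<n})) / real n + real (card (B \<inter> {..<n})) / real n"])
  have "real (card ((A \<union> B) \<inter> {..<n}))
      \<le> real (card (A \<inter> {..<n})) + real (card (B \<inter> {..<n}))" for n
    by (metis Int_Un_distrib2 card_Un_le of_nat_add of_nat_le_iff)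
  then show "\<forall>\<^sub>F n in sequentially. real (card ((A \<union> B) \<inter> {..<n})) / real n
      \<le> real (card (A \<inter> {..<n})) / real n + real (card (B \<inter> {..<n})) / real n"
    by (intro always_eventually allI) (simp add: add_divide_distrib [symmetric] divide_right_mono)
  show "(\<lambda>n. real (card (A \<inter> {..<n})) / real n + real (card (B \<inter> {..<n})) / real n)
      \<longlonglongrightarrow> 0"
    using tendsto_add[OF assms[unfolded zero_density_def]] by simp
qed auto

lemma zero_density_range_if_eventually:
  assumes "zero_density A" "\<forall>\<^sub>F n in sequentially. f n \<in> A"
  shows "zero_density (range f)"
proof -
  obtain N where N: "\<And>n. n \<ge> N \<Longrightarrow> f n \<in> A"
    using assms(2) unfolding eventually_sequentially by blast
  have sub: "range f \<subseteq> f ` {..<N} \<union> A"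
  proof
    fix y assume "y \<in> range f"
    then obtain n where "y = f n" by blast
    then show "y \<in> f ` {..<N} \<union> A"
      using N[of n] by (cases "n < N") auto
  qed
  have "zero_density (f ` {..<N} \<union> A)"
    by (intro zero_density_Un zero_density_finite assms(1)) simp
  then show ?thesis
    using sub by (rule zero_density_subset)
qed

lemma squares_less_subset: "{k::nat. k * k < n} \<subseteq> {..floor_sqrt n}"
  by (auto simp: le_floor_sqrt_iff power2_eq_square)

lemma finite_squares_less: "finite {k::nat. k * k < n}"
  by (rule finite_subset[OF squares_less_subset]) simp

lemma card_squares_less: "real (card {k::nat. k * k < n}) \<le> sqrt (real n) + 1"
proof -
  have "card {k::nat. k * k < n} \<le> floor_sqrt n + 1"
    using card_mono[OF _ squares_less_subset] by simp
  moreover have "real (floor_sqrt n) \<le> sqrt n"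
    by (metis floor_sqrt_power2_le of_nat_le_iff of_nat_power real_le_rsqrt)
  ultimately show ?thesis
    by linarith
qed

lemma zero_density_range_above_square:
  assumes "\<And>k. k * k \<le> f k"
  shows "zero_density (range f)"
  unfolding zero_density_def
proof (rule tendsto_sandwich[of "\<lambda>_. 0" _ _ "\<lambda>n. (sqrt n + 1) / real n"])
  show "\<forall>\<^sub>F n in sequentially. real (card (range f \<inter> {..<n})) / real n \<le> (sqrt n + 1) / real n"
  proof (intro always_eventually allI divide_right_mono)
    fix n
    note fin = finite_squares_less[of n]
    have "range f \<inter> {..<n} \<subseteq> f ` {k. k * k < n}"
    proof
      fix y assume "y \<in> range f \<inter> {..<n}"
      then obtain k where "y = f k" "f k < n" by auto
      then show "y \<in> f ` {k. k * k < n}"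
        using assms[of k] by auto
    qed
    then have "card (range f \<inter> {..<n}) \<le> card (f ` {k. k * k < n})"
      using fin by (intro card_mono) auto
    also have "\<dots> \<le> card {k. k * k < n}"
      using fin by (rule card_image_le)
    finally have "card (range f \<inter> {..<n}) \<le> card {k. k * k < n}" .
    then show "real (card (range f \<inter> {..<n})) \<le> sqrt n + 1"
      using card_squares_less[of n] by linarith
  qed simp
  show "(\<lambda>n. (sqrt (real n) + 1) / real n) \<longlonglongrightarrow> 0"
    by real_asymp
qed auto

lemma enumerate_le_strict_mono:
  assumes "infinite K" "strict_mono g" "range g \<subseteq> K"
  shows "enumerate K n \<le> g n"
proof (induction n)
  case 0
  show ?case
    using assms(3) by (auto simp: enumerate_0 intro: Least_le)
next
  case (Suc n)
  have "enumerate K n < g (Suc n)"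
    using Suc assms(2) by (meson le_less_trans lessI strict_mono_def)
  then show ?case
    using assms(3) unfolding enumerate_Suc''[OF assms(1)] by (auto intro: Least_le)
qed

lemma upper_density_eq_0_if_zero_density:
  assumes S: "zero_density S" and K: "infinite K" and le: "\<And>n. enumerate K n \<le> c * n"
  shows "upper_density S K = 0"
proof -
  define d where "d = (\<lambda>n. real (card (S \<inter> {..<n})) / real n)"
  define r where "r = (\<lambda>n. real (card (S \<inter> enumerate K ` {..<n})) / real n)"
  have "enumerate K 0 < enumerate K 1"
    using K by simp
  then have "0 < c"
    using le[of 1] by simp
  then have "strict_mono (\<lambda>n. c * n)"
    by (simp add: strict_mono_def)
  from LIMSEQ_subseq_LIMSEQ[OF S[unfolded zero_density_def, folded d_def] this]
  have lim: "(\<lambda>n. real c * d (c * n)) \<longlonglongrightarrow> 0"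
    by (simp add: o_def tendsto_mult_right_zero)
  have bound: "r n \<le> real c * d (c * n)" for n
  proof -
    have "enumerate K ` {..<n} \<subseteq> {..<c * n}"
    proof
      fix y assume "y \<in> enumerate K ` {..<n}"
      then obtain i where "i < n" "y = enumerate K i" by blast
      then show "y \<in> {..<c * n}"
        using enumerate_mono[OF \<open>i < n\<close> K] le[of n] by simp
    qed
    then have "card (S \<inter> enumerate K ` {..<n}) \<le> card (S \<inter> {..<c * n})"
      by (intro card_mono) auto
    then show ?thesis
      using \<open>0 < c\<close> by (simp add: r_def d_def divide_right_mono)
  qed
  have "r \<longlonglongrightarrow> 0"
  proof (rule tendsto_sandwich[OF _ _ tendsto_const lim])
    show "\<forall>\<^sub>F n in sequentially. 0 \<le> r n"
      by (simp add: r_def)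
    show "\<forall>\<^sub>F n in sequentially. r n \<le> real c * d (c * n)"
      using bound by simp
  qed
  then have "limsup (\<lambda>n. ereal (r n)) = 0"
    by (intro lim_imp_Limsup) (auto simp: zero_ereal_def intro: tendsto_ereal)
  then show ?thesis
    by (simp add: upper_density_def r_def)
qed

definition square_slot :: "nat \<Rightarrow> bool" where
  "square_slot t \<longleftrightarrow> (\<exists>k. t = k * k \<and> k mod 3 \<noteq> 2)"

definition stream :: "nat \<Rightarrow> nat" where
  "stream t = (if square_slot t then floor_sqrt t else 3 * t * t + 2)"

definition shared :: "nat set" where
  "shared = (\<lambda>t. 3 * t * t + 2) ` {t. \<not> square_slot t}"

definition lang :: "nat \<Rightarrow> nat set" where
  "lang r = {m. m mod 3 = r} \<union> shared"

lemma stream_square: "k mod 3 \<noteq> 2 \<Longrightarrow> stream (k * k) = k"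
  by (auto simp: stream_def square_slot_def power2_eq_square [symmetric])

lemma stream_mod_3_eq_2_iff: "stream t mod 3 = 2 \<longleftrightarrow> \<not> square_slot t"
proof (cases "square_slot t")
  case True
  then obtain k where "t = k * k" "k mod 3 \<noteq> 2"
    by (auto simp: square_slot_def)
  then show ?thesis
    using True stream_square by simp
next
  case False
  then have "stream t = 3 * (t * t) + 2"
    by (simp add: stream_def mult.assoc)
  then show ?thesis
    using False by (simp only: mod_mult_self4) simp
qed

lemma inj_stream: "inj stream"
proof (rule injI)
  fix a b assume eq: "stream a = stream b"
  then have slot: "square_slot a \<longleftrightarrow> square_slot b"
    using stream_mod_3_eq_2_iff by metis
  show "a = b"
  proof (cases "square_slot a")
    case True
    then obtain k l where "a = k * k" "k mod 3 \<noteq> 2" "b = l * l" "l mod 3 \<noteq> 2"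
      using slot by (auto simp: square_slot_def)
    then show ?thesis
      using eq stream_square by metis
  next
    case False
    then have "a * a = b * b"
      using eq slot by (simp add: stream_def)
    then show ?thesis
      by (metis power2_eq_square power2_eq_iff_nonneg zero_le)
  qed
qed

lemma range_stream: "range stream = {m. m mod 3 \<noteq> 2} \<union> shared"
proof
  show "range stream \<subseteq> {m. m mod 3 \<noteq> 2} \<union> shared"
  proof
    fix m assume "m \<in> range stream"
    then obtain t where m: "m = stream t"
      by blast
    show "m \<in> {m. m mod 3 \<noteq> 2} \<union> shared"
    proof (cases "square_slot t")
      case True
      then show ?thesis
        using m stream_mod_3_eq_2_iff by simp
    next
      case False
      then show ?thesis
        using m by (simp add: stream_def shared_def)
    qed
  qed
  show "{m. m mod 3 \<noteq> 2} \<union> shared \<subseteq> range stream"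
  proof
    fix m assume "m \<in> {m. m mod 3 \<noteq> 2} \<union> shared"
    then consider "m mod 3 \<noteq> 2" | t where "\<not> square_slot t" "m = 3 * t * t + 2"
      by (auto simp: shared_def)
    then show "m \<in> range stream"
    proof cases
      case 1
      then show ?thesis
        using stream_square[of m] by (metis rangeI)
    next
      case 2
      then show ?thesis
        by (metis rangeI stream_def)
    qed
  qed
qed

lemma stream_notin_lang: "stream t \<notin> lang r \<Longrightarrow> square_slot t"
  by (auto simp: lang_def shared_def stream_def)

lemma lang_Int_subset_shared: "r \<noteq> r' \<Longrightarrow> lang r \<inter> lang r' \<subseteq> shared"
  by (auto simp: lang_def)

lemma zero_density_shared: "zero_density shared"
proof -
  have "shared \<subseteq> range (\<lambda>t. 3 * t * t + 2)"
    by (auto simp: shared_def)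
  then show ?thesis
    by (rule zero_density_subset[OF zero_density_range_above_square, rotated]) simp
qed

lemma infinite_lang: "r < 3 \<Longrightarrow> infinite (lang r)"
proof -
  assume "r < 3"
  then have "range (\<lambda>i. 3 * i + r) \<subseteq> lang r"
    by (auto simp: lang_def)
  moreover have "infinite (range (\<lambda>i::nat. 3 * i + r))"
    by (rule range_inj_infinite) (auto simp: inj_def)
  ultimately show ?thesis
    by (rule infinite_super)
qed

lemma enumerate_lang_0_le: "enumerate (lang 0) n \<le> 3 * n"
proof (rule enumerate_le_strict_mono[where g = "\<lambda>n. 3 * n"])
  show "infinite (lang 0)"
    by (simp add: infinite_lang)
  show "strict_mono (\<lambda>n::nat. 3 * n)"
    by (simp add: strict_mono_def)
  show "range (\<lambda>n. 3 * n) \<subseteq> lang 0"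
    by (auto simp: lang_def)
qed

lemma noisy_enumeration_iff_zero_density:
  "noisy_enumeration x L \<longleftrightarrow> inj x \<and> L \<subseteq> range x \<and> zero_density {t. x t \<notin> L}"
  unfolding noisy_enumeration_def zero_density_def
  by (simp add: Int_def lessThan_def conj_commute)

lemma noisy_enumeration_stream_lang: "r \<noteq> 2 \<Longrightarrow> noisy_enumeration stream (lang r)"
proof -
  assume "r \<noteq> 2"
  then have "lang r \<subseteq> range stream"
    by (auto simp: lang_def range_stream)
  moreover have "{t. stream t \<notin> lang r} \<subseteq> range (\<lambda>k. k * k)"
  proof
    fix t assume "t \<in> {t. stream t \<notin> lang r}"
    then obtain k where "t = k * k"
      using stream_notin_lang[of t r] by (auto simp: square_slot_def)
    then show "t \<in> range (\<lambda>k. k * k)"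
      by simp
  qed
  then have "zero_density {t. stream t \<notin> lang r}"
    by (rule zero_density_subset[OF zero_density_range_above_square, rotated]) simp
  ultimately show ?thesis
    by (simp add: noisy_enumeration_iff_zero_density inj_stream)
qed

theorem theorem6p20:
  shows "\<exists>L1 L2 (x :: nat \<Rightarrow> nat).
     is_language L1 \<and> is_language L2 \<and>
     (\<forall>K\<in>{L1, L2}. noisy_enumeration x K) \<and>
     (\<forall>\<rho>::real. \<rho> > 0 \<longrightarrow>
        \<not> (\<exists>G. valid_generator G x \<and>
               (\<forall>K\<in>{L1, L2}. generates_in_limit G x K \<and> achieves_upper_density G x K \<rho>)))"
proof (intro exI conjI allI impI notI)
  show "is_language (lang 0)" "is_language (lang 1)"
    by (simp_all add: is_language_def infinite_lang)
  show "\<forall>K\<in>{lang 0, lang 1}. noisy_enumeration stream K"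
    by (simp add: noisy_enumeration_stream_lang)
  fix \<rho> :: real
  assume "\<rho> > 0" and "\<exists>G. valid_generator G stream \<and>
    (\<forall>K\<in>{lang 0, lang 1}. generates_in_limit G stream K \<and> achieves_upper_density G stream K \<rho>)"
  then obtain G where lim0: "generates_in_limit G stream (lang 0)"
    and lim1: "generates_in_limit G stream (lang 1)"
    and dens: "achieves_upper_density G stream (lang 0) \<rho>"
    by auto
  have "\<forall>\<^sub>F n in sequentially. gen_output G stream n \<in> shared"
    using eventually_conj[OF lim0[unfolded generates_in_limit_def] lim1[unfolded generates_in_limit_def]]
      lang_Int_subset_shared[of 0 1] by (auto elim: eventually_mono)
  then have "zero_density (range (gen_output G stream))"
    by (rule zero_density_range_if_eventually[OF zero_density_shared])
  then have "upper_density (range (gen_output G stream)) (lang 0) = 0"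
    by (rule upper_density_eq_0_if_zero_density[OF _ _ enumerate_lang_0_le]) (simp add: infinite_lang)
  with dens \<open>\<rho> > 0\<close> show False
    by (simp add: achieves_upper_density_def zero_ereal_def)
qed

end
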